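(* Let $h:\mathbb{T}^2\to\mathbb{R}^4$ and $D=D_1+iD_2:\mathbb{T}^2\to\mathbb{C}$ be smooth, let $H(\mathbf{k})=\vec h(\mathbf{k})\cdot\vec S+\vec h'(\mathbf{k})\cdot\vec T$ be the family of $4\times 4$ Hermitian matrices defined in the context, and assume $\det H(\mathbf{k})\neq0$ for all $\mathbf{k}\in\mathbb{T}^2$. Then: (i) The function $p(\mathbf{k})=|\vec h(\mathbf{k})|^2-|\vec h'(\mathbf{k})|^2$ is either strictly positive for all $\mathbf{k}$ or strictly negative for all $\mathbf{k}$. If $p>0$, there is a smooth homotopy $H_t(\mathbf{k})$, $t\in[0,1]$, of families of Hermitian matrices with $\det H_t(\mathbf{k})\ne0$ for all $t,\mathbf{k}$, $H_0=H$ and $H_1(\mathbf{k})=\widetilde H(\mathbf{k})=\vec h(\mathbf{k})\cdot\vec S/|\vec h(\mathbf{k})|$; if $p<0$, the same holds with $\widetilde H(\mathbf{k})=\vec h'(\mathbf{k})\cdot\vec T/|\vec h'(\mathbf{k})|$. (In particular a family with $p>0$ cannot be deformed through nonsingular families of this form into one with $p<0$.) (ii) Let $E\to\mathbb{T}^2$ be the occupied Bloch bundle, whose fiber at $\mathbf{k}$ is the span of the eigenvectors of $H(\mathbf{k})$ with negative eigenvalues (a rank-2 complex vector bundle). Then the first Chern number of $E$ equals twice the degree (winding number) of the map $\Phi_1:\mathbb{T}^2\to S^2$, $\mathbf{k}\mapsto\vec h(\mathbf{k})/|\vec h(\mathbf{k})|$, if $p>0$, and twice the degree of $\Phi_2:\mathbb{T}^2\to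 S^2$, $\mathbf{k}\mapsto \vec h'(\mathbf{k})/|\vec h'(\mathbf{k})|$, if $p<0$. (iii) If $H(\mathbf{k})$ is regarded as a Bogoliubov–de Gennes Hamiltonian (particle and hole degrees of freedom doubled), the Chern number of the system, defined as one half of the first Chern number of $E$ to account for the doubling, equals the degree of $\Phi_1$ if $p>0$ and the degree of $\Phi_2$ if $p<0$.
   Context: $\tau_0$ is the $2\times2$ identity and $\tau_1,\tau_2,\tau_3$ are the Pauli matrices; $h\cdot\tau=\sum_{\mu=0}^3h_\mu\tau_\mu$. $\mathbb{T}^2$ is the Brillouin zone (two-torus). The family is $$H(\mathbf{k})=\begin{pmatrix} h(\mathbf{k})\cdot\tau & iD^*(\mathbf{k})\tau_2\\ -iD(\mathbf{k})\tau_2 & -(h(\mathbf{k})\cdot\tau)^T\end{pmatrix}.$$ Set $\vec h=(h_1,h_2,h_3)$ and $\vec h'=(D_1,D_2,h_0)$, and define the $4\times4$ matrices (in $2\times2$ block form, $I$ the $2\times 2$ identity) $S_1=\mathrm{diag}(\tau_1,-\tau_1)$, $S_2=\mathrm{diag}(\tau_2,\tau_2)$, $S_3=\mathrm{diag}(\tau_3,-\tau_3)$, $T_1=\begin{pmatrix}0&i\tau_2\\-i\tau_2&0\end{pmatrix}$, $T_2=\begin{pmatrix}0&\tau_2\\\tau_2&0\end{pmatrix}$, $T_3=\mathrm{diag}(I,-I)$, so that $H(\mathbf{k})=\vec h(\mathbf{k})\cdot\vec S+\vec h'(\mathbf{k})\cdot\vec T$ with $\vec h\cdot\vec S=\sum_i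 h_iS_i$, $\vec h'\cdot\vec T=\sum_i h'_iT_i$. The degree of a map $\mathbb{T}^2\to S^2$ is taken with respect to the standard orientations, with the convention that the negative-energy eigenline bundle of $\hat n(\mathbf{k})\cdot(\tau_1,\tau_2,\tau_3)$ has Chern number equal to the degree of $\hat n$. *)

theory Defs
  imports "HOL-Analysis.Analysis"
begin

coinductive smooth :: "('a::euclidean_space \<Rightarrow> 'b::real_normed_vector) \<Rightarrow> bool" where
  smoothI: "(\<forall>x. f differentiable (at x)) \<Longrightarrow>
            (\<forall>v. smooth (\<lambda>x. frechet_derivative f (at x) v)) \<Longrightarrow> smooth f"

text \<open>Functions on the torus are represented as Z^2-periodic functions on R^2;
  the fundamental domain is the unit square [0,1] x [0,1].\<close>
definition periodic2 :: "(real \<times> real \<Rightarrow> 'b) \<Rightarrow> bool" where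
  "periodic2 f \<longleftrightarrow> (\<forall>x y. f (x + 1, y) = f (x, y) \<and> f (x, y + 1) = f (x, y))"

definition unit_square :: "(real \<times> real) set" where
  "unit_square = cbox (0, 0) (1, 1)"

definition dx :: "(real \<times> real \<Rightarrow> 'b::real_normed_vector) \<Rightarrow> real \<times> real \<Rightarrow> 'b" where
  "dx f k = frechet_derivative f (at k) (1, 0)"

definition dy :: "(real \<times> real \<Rightarrow> 'b::real_normed_vector) \<Rightarrow> real \<times> real \<Rightarrow> 'b" where
  "dy f k = frechet_derivative f (at k) (0, 1)"

definition cadj :: "complex^'n^'n \<Rightarrow> complex^'n^'n" where
  "cadj A = (\<chi> i j. cnj (A $ j $ i))"

definition hermitian :: "complex^'n^'n \<Rightarrow> bool" where
  "hermitian A \<longleftrightarrow> cadj A = A"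

text \<open>2x2 matrices as functions on indices 0,1; the Pauli matrices tau_0..tau_3.\<close>
type_synonym m2 = "nat \<Rightarrow> nat \<Rightarrow> complex"

definition tau0 :: m2 where "tau0 a b = (if a = b then 1 else 0)"
definition tau1 :: m2 where "tau1 a b = (if a \<noteq> b then 1 else 0)"
definition tau2 :: m2 where
  "tau2 a b = (if a = 0 \<and> b = 1 then - \<i> else if a = 1 \<and> b = 0 then \<i> else 0)"
definition tau3 :: m2 where
  "tau3 a b = (if a = b then (if a = 0 then 1 else -1) else 0)"

definition zero2 :: m2 where "zero2 a b = 0"

text \<open>Indices of 4x4 matrices: the elements of type 4 correspond to 0,1,2,3.\<close>
definition idx4 :: "4 \<Rightarrow> nat" where "idx4 i = nat (Rep_bit0 i)"

definition blk :: "m2 \<Rightarrow> m2 \<Rightarrow> m2 \<Rightarrow> m2 \<Rightarrow> complex^4^4" where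
  "blk A B C Dm = (\<chi> i j. let a = idx4 i; b = idx4 j in
      (if a < 2 then (if b < 2 then A a b else B a (b - 2))
                else (if b < 2 then C (a - 2) b else Dm (a - 2) (b - 2))))"

definition S1 :: "complex^4^4" where "S1 = blk tau1 zero2 zero2 (\<lambda>a b. - tau1 a b)"
definition S2 :: "complex^4^4" where "S2 = blk tau2 zero2 zero2 tau2"
definition S3 :: "complex^4^4" where "S3 = blk tau3 zero2 zero2 (\<lambda>a b. - tau3 a b)"
definition T1 :: "complex^4^4" where
  "T1 = blk zero2 (\<lambda>a b. \<i> * tau2 a b) (\<lambda>a b. - \<i> * tau2 a b) zero2"
definition T2 :: "complex^4^4" where "T2 = blk zero2 tau2 tau2 zero2"
definition T3 :: "complex^4^4" where "T3 = blk tau0 zero2 zero2 (\<lambda>a b. - tau0 a b)"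

text \<open>h(k) = (h_0, h_1, h_2, h_3) is stored as h k :: real^4 with components
  h k $ 0, h k $ 1, h k $ 2, h k $ 3.\<close>
definition hdot_tau :: "real^4 \<Rightarrow> m2" where
  "hdot_tau v a b = complex_of_real (v $ 0) * tau0 a b + complex_of_real (v $ 1) * tau1 a b
                  + complex_of_real (v $ 2) * tau2 a b + complex_of_real (v $ 3) * tau3 a b"

definition Hmat :: "(real \<times> real \<Rightarrow> real^4) \<Rightarrow> (real \<times> real \<Rightarrow> complex) \<Rightarrow> real \<times> real \<Rightarrow> complex^4^4" where
  "Hmat h D k = blk (hdot_tau (h k))
                    (\<lambda>a b. \<i> * cnj (D k) * tau2 a b)
                    (\<lambda>a b. - \<i> * D k * tau2 a b)
                    (\<lambda>a b. - hdot_tau (h k) b a)"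

definition hvec :: "(real \<times> real \<Rightarrow> real^4) \<Rightarrow> real \<times> real \<Rightarrow> real^3" where
  "hvec h k = vector [h k $ 1, h k $ 2, h k $ 3]"

definition hvec' :: "(real \<times> real \<Rightarrow> real^4) \<Rightarrow> (real \<times> real \<Rightarrow> complex) \<Rightarrow> real \<times> real \<Rightarrow> real^3" where
  "hvec' h D k = vector [Re (D k), Im (D k), h k $ 0]"

definition vS :: "real^3 \<Rightarrow> complex^4^4" where
  "vS v = v $ 1 *\<^sub>R S1 + v $ 2 *\<^sub>R S2 + v $ 3 *\<^sub>R S3"

definition vT :: "real^3 \<Rightarrow> complex^4^4" where
  "vT v = v $ 1 *\<^sub>R T1 + v $ 2 *\<^sub>R T2 + v $ 3 *\<^sub>R T3"

definition pfun :: "(real \<times> real \<Rightarrow> real^4) \<Rightarrow> (real \<times> real \<Rightarrow> complex) \<Rightarrow> real \<times> real \<Rightarrow> real" where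
  "pfun h D k = (norm (hvec h k))\<^sup>2 - (norm (hvec' h D k))\<^sup>2"

definition neg_space :: "complex^'n^'n \<Rightarrow> (complex^'n) set" where
  "neg_space A = span {v. \<exists>l::real. l < 0 \<and> A *v v = complex_of_real l *s v}"

definition neg_proj :: "complex^'n^'n \<Rightarrow> complex^'n^'n" where
  "neg_proj A = (THE P. P ** P = P \<and> hermitian P \<and> range (\<lambda>v. P *v v) = neg_space A)"

text \<open>First Chern number of the subbundle of the trivial bundle T^2 x C^n given by a
  smooth periodic family of orthogonal projectors P (Chern-Weil):
  c_1 = (i / 2 pi) * integral over T^2 of tr(P [d_x P, d_y P]).\<close>
definition chern_number :: "(real \<times> real \<Rightarrow> complex^'n^'n) \<Rightarrow> complex" where
  "chern_number P = (\<i> / (2 * complex_of_real pi)) *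
     integral unit_square (\<lambda>k. trace (P k ** (dx P k ** dy P k - dy P k ** dx P k)))"

definition occupied_chern :: "(real \<times> real \<Rightarrow> complex^'n^'n) \<Rightarrow> complex" where
  "occupied_chern H = chern_number (\<lambda>k. neg_proj (H k))"

definition bdg_chern :: "(real \<times> real \<Rightarrow> complex^'n^'n) \<Rightarrow> complex" where
  "bdg_chern H = occupied_chern H / 2"

definition degree_S2 :: "(real \<times> real \<Rightarrow> real^3) \<Rightarrow> real" where
  "degree_S2 n = (1 / (4 * pi)) * integral unit_square (\<lambda>k. n k \<bullet> cross3 (dx n k) (dy n k))"


lemma idx4_simps: "idx4 4 = 0" "idx4 1 = 1" "idx4 2 = 2" "idx4 3 = 3"
  by (simp_all add: idx4_def bit0.Rep_numeral bit0.Rep_1)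

lemma Hmat_decomp: "Hmat h D k = vS (hvec h k) + vT (hvec' h D k)"
proof -
  have z: "(0::4) = 4" by simp
  have v: "vector [a,b,c] $ (1::3) = a" "vector [a,b,c] $ (2::3) = b" "vector [a,b,c] $ (3::3) = c"
    for a b c :: real by (simp_all add: vector_def)
  have "\<forall>i j. Hmat h D k $ i $ j = (vS (hvec h k) + vT (hvec' h D k)) $ i $ j"
    unfolding Hmat_def vS_def vT_def hvec_def hvec'_def S1_def S2_def S3_def T1_def T2_def T3_def forall_4
    by (simp add: blk_def Let_def v z idx4_simps hdot_tau_def tau0_def tau1_def tau2_def tau3_def
        zero2_def complex_eq_iff)
  then show ?thesis by (simp add: vec_eq_iff)
qed

end

theory Submission
  imports Defs
begin

text \<open>Write H = A h + B h' with A u = u . S and B w = w . T. Both maps satisfy the Pauli relations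
  A u A w = (u . w) I + i A (u x w) and they commute with each other, so
  (A u + B w)(A u - B w) = (|u|^2 - |w|^2) I. Hence a vanishing p would force A h = B h', i.e.
  h = h' = 0 and H = 0; so p never vanishes and has constant sign on the connected torus.
  If |h| > |h'|, then B h' only splits the eigenvalues -|h| and |h| of A h by at most |h'|,
  so the occupied subspace is the -|h| eigenspace of A h, with projector (1 - A n)/2 for
  n = h/|h|. Shrinking h' to 0 while normalising h keeps |h| > |h'| along the way, which gives the
  homotopy, and the Pauli relations turn the Chern-Weil integrand of (1 - A n)/2 into a multiple
  of n . (d_x n x d_y n), giving twice the degree of n. The case p < 0 is symmetric.\<close>

section \<open>Linear algebra of commuting square roots\<close>

lemma cmatrix_vector_mult_scaleR: "(M::complex^'n^'m) *v (c *\<^sub>R v) = c *\<^sub>R (M *v v)"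
  unfolding vec_eq_iff matrix_vector_mult_def vector_scaleR_component
  by (simp add: scaleR_conv_of_real sum_distrib_left mult.left_commute)

lemma scaleR_cmatrix_vector_mult: "((c::real) *\<^sub>R (M::complex^'n^'m)) *v v = c *\<^sub>R (M *v v)"
  unfolding vec_eq_iff matrix_vector_mult_def vector_scaleR_component
  by (simp add: scaleR_conv_of_real sum_distrib_left mult.assoc)

lemma matrix_vector_mult_uminus: "(M::'a::ring_1^'n^'m) *v (- v) = - (M *v v)"
  by (simp add: vec_eq_iff matrix_vector_mult_def sum_negf)

lemma of_real_smult_eq_scaleR: "complex_of_real l *s v = l *\<^sub>R (v::complex^'n)"
  unfolding vec_eq_iff vector_scaleR_component vector_smult_component by (simp add: scaleR_conv_of_real)

lemma matrix_add_rdistrib: "((A::'a::semiring_1^'n^'m) + B) ** C = A ** C + B ** C"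
  by (simp add: vec_eq_iff matrix_matrix_mult_def sum.distrib distrib_right)

lemma matrix_diff_ldistrib: "(A::'a::ring_1^'n^'m) ** (B - C) = A ** B - A ** C"
  by (simp add: vec_eq_iff matrix_matrix_mult_def sum_subtractf right_diff_distrib)

lemma matrix_diff_rdistrib: "((A::'a::ring_1^'n^'m) - B) ** C = A ** C - B ** C"
  by (simp add: vec_eq_iff matrix_matrix_mult_def sum_subtractf left_diff_distrib)

lemma matrix_mult_uminus_right: "(A::'a::ring_1^'n^'m) ** (- B) = - (A ** B)"
  by (simp add: vec_eq_iff matrix_matrix_mult_def sum_negf)

lemma matrix_mult_uminus_left: "(- A::'a::ring_1^'n^'m) ** B = - (A ** B)"
  by (simp add: vec_eq_iff matrix_matrix_mult_def sum_negf)

lemma scaleR_mat_1: "r *\<^sub>R (mat 1 :: 'a::real_algebra_1^'n^'n) = mat (of_real r)"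
  by (simp add: vec_eq_iff mat_def of_real_def)

lemma mat_matrix_mult: "mat (c::'a::comm_semiring_1) ** (A::'a^'n^'n) = A ** mat c"
  by (simp add: vec_eq_iff matrix_matrix_mult_def mat_def if_distrib if_distribR mult.commute cong: if_cong)

lemma trace_mat_mult: "trace (mat (c::'a::comm_semiring_1) ** (A::'a^'n^'n)) = c * trace A"
  by (simp add: trace_def matrix_matrix_mult_def mat_def if_distrib if_distribR sum_distrib_left cong: if_cong)

lemma trace_scaleR: "trace ((r::real) *\<^sub>R (A::'a::real_algebra_1^'n^'n)) = r *\<^sub>R trace A"
  by (simp add: trace_def scaleR_sum_right)

lemma cadj_matrix_mult: "cadj ((A::complex^'n^'n) ** B) = cadj B ** cadj A"
  by (simp add: vec_eq_iff cadj_def matrix_matrix_mult_def mult.commute)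

lemma hermitian_projector_unique:
  fixes P Q :: "complex^'n^'n"
  assumes "P ** P = P" "hermitian P" "Q ** Q = Q" "hermitian Q"
    and "range (\<lambda>v. P *v v) = range (\<lambda>v. Q *v v)"
  shows "P = Q"
proof -
  have absorb: "Q ** P = P" if QQ: "Q ** Q = Q" and sub: "range (\<lambda>v. P *v v) \<subseteq> range (\<lambda>v. Q *v v)"
    for P Q :: "complex^'n^'n"
  proof (rule matrix_eq[THEN iffD2], intro allI)
    fix v
    obtain w where w: "P *v v = Q *v w" using sub by blast
    show "(Q ** P) *v v = P *v v"
      by (simp add: w QQ flip: matrix_vector_mul_assoc) (simp add: QQ matrix_vector_mul_assoc)
  qed
  have "P = cadj (Q ** P)" using absorb assms by (simp add: hermitian_def)
  also have "\<dots> = P ** Q" using assms(2,4) by (simp add: cadj_matrix_mult hermitian_def)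
  also have "\<dots> = Q" using absorb assms by simp
  finally show ?thesis .
qed

lemma neg_proj_eqI:
  assumes "P ** P = P" "hermitian P" "range (\<lambda>v. P *v v) = neg_space M"
  shows "neg_proj M = P"
  unfolding neg_proj_def
proof (rule the_equality)
  fix Q assume "Q ** Q = Q \<and> hermitian Q \<and> range (\<lambda>v. Q *v v) = neg_space M"
  then show "Q = P" using assms hermitian_projector_unique[of Q P] by simp
qed (use assms in simp)

lemma commuting_square_roots_mult:
  fixes A B :: "'a::comm_ring_1^'n^'n"
  assumes "A ** B = B ** A" "A ** A = mat a" "B ** B = mat b"
  shows "(A + B) ** (A - B) = mat (a - b)"
  using assms by (simp add: matrix_add_rdistrib matrix_diff_ldistrib vec_eq_iff mat_def)

lemma det_commuting_square_roots_add_nonzero: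
  fixes A B :: "'a::field^'n^'n"
  assumes "A ** B = B ** A" "A ** A = mat a" "B ** B = mat b" "a \<noteq> b"
  shows "det (A + B) \<noteq> 0"
proof -
  have "det (A + B) * det (A - B) = (a - b) ^ CARD('n)"
    using commuting_square_roots_mult[OF assms(1-3)] by (simp add: det_mul[symmetric] det_diagonal mat_def)
  then show ?thesis using assms(4) by auto
qed

lemma commuting_square_roots_eq_if_det_nonzero:
  fixes A B :: "'a::field^'n^'n"
  assumes "A ** B = B ** A" "A ** A = mat a" "B ** B = mat a" "det (A + B) \<noteq> 0"
  shows "A = B"
proof -
  obtain C where C: "C ** (A + B) = mat 1"
    using assms(4) invertible_det_nz invertible_def by blast
  have "A - B = C ** ((A + B) ** (A - B))"
    by (simp only: matrix_mul_assoc C matrix_mul_lid)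
  also have "\<dots> = 0" using commuting_square_roots_mult[OF assms(1-3)] by simp
  finally show ?thesis by simp
qed

context
  fixes A B :: "complex^'n^'n" and a b :: real
  assumes commute: "A ** B = B ** A"
    and A_square: "A ** A = (a\<^sup>2) *\<^sub>R mat 1" and B_square: "B ** B = (b\<^sup>2) *\<^sub>R mat 1"
    and b_nonneg: "0 \<le> b" and b_less_a: "b < a" and B_zero: "b = 0 \<Longrightarrow> B = 0"
begin

private lemma A_twice: "A *v (A *v v) = (a\<^sup>2) *\<^sub>R v"
  by (simp add: matrix_vector_mul_assoc A_square scaleR_cmatrix_vector_mult)

private lemma B_twice: "B *v (B *v v) = (b\<^sup>2) *\<^sub>R v"
  by (simp add: matrix_vector_mul_assoc B_square scaleR_cmatrix_vector_mult)

private lemma AB_commute: "A *v (B *v v) = B *v (A *v v)"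
  by (simp add: matrix_vector_mul_assoc commute)

text \<open>If (A + B) v = l v, then u = (A + a) v satisfies A u = a u and B u = (l - a) u;
  as B has eigenvalues of modulus b < a - l, this forces u = 0.\<close>
lemma neg_eigenvector_commuting_sum:
  assumes l: "l < 0" and eigen: "(A + B) *v v = l *\<^sub>R v"
  shows "A *v v = (-a) *\<^sub>R v"
proof -
  define u where "u = A *v v + a *\<^sub>R v"
  have Bv: "B *v v = l *\<^sub>R v - A *v v"
    using eigen by (simp add: matrix_vector_mult_add_rdistrib algebra_simps)
  have "B *v u = A *v (B *v v) + a *\<^sub>R (B *v v)"
    unfolding u_def by (simp add: matrix_vector_right_distrib cmatrix_vector_mult_scaleR AB_commute)
  also have "\<dots> = (l - a) *\<^sub>R u"
    unfolding Bv u_def matrix_vector_mult_diff_distrib cmatrix_vector_mult_scaleR A_twice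
    by (simp add: algebra_simps power2_eq_square)
  finally have Bu: "B *v u = (l - a) *\<^sub>R u" .
  have "(b\<^sup>2) *\<^sub>R u = ((l - a)\<^sup>2) *\<^sub>R u"
    unfolding B_twice[symmetric] by (simp add: Bu cmatrix_vector_mult_scaleR power2_eq_square)
  then have "((l - a)\<^sup>2 - b\<^sup>2) *\<^sub>R u = 0" by (auto simp: scaleR_left_diff_distrib)
  moreover have "b\<^sup>2 < (l - a)\<^sup>2"
    using l b_less_a b_nonneg by (simp add: power2_commute[of l] power_strict_mono)
  ultimately have "u = 0" by simp
  then show ?thesis unfolding u_def by (simp add: eq_neg_iff_add_eq_0)
qed

lemma neg_eigenvector_in_neg_space:
  assumes "l < 0" "(A + B) *v v = l *\<^sub>R v"
  shows "v \<in> neg_space (A + B)"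
  unfolding neg_space_def by (rule span_base) (use assms in \<open>auto simp: of_real_smult_eq_scaleR\<close>)

text \<open>Conversely, B splits the -a eigenspace of A into its -a + b and -a - b eigenspaces
  for A + B, both negative.\<close>
lemma eigenspace_subset_neg_space:
  assumes Av: "A *v v = (-a) *\<^sub>R v"
  shows "v \<in> neg_space (A + B)"
proof (cases "b = 0")
  case True
  then show ?thesis
    using b_less_a Av B_zero by (intro neg_eigenvector_in_neg_space[of "-a"]) auto
next
  case False
  then have b_pos: "b > 0" using b_nonneg by simp
  define vp where "vp = (1/2) *\<^sub>R (v + (1/b) *\<^sub>R (B *v v))"
  define vm where "vm = (1/2) *\<^sub>R (v - (1/b) *\<^sub>R (B *v v))"
  have "(A + B) *v vp = (-a + b) *\<^sub>R vp"
    unfolding vp_def using b_pos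
    by (simp add: matrix_vector_mult_add_rdistrib matrix_vector_right_distrib cmatrix_vector_mult_scaleR
        AB_commute Av B_twice matrix_vector_mult_uminus algebra_simps power2_eq_square)
       (simp only: vec_eq_iff vector_scaleR_component vector_add_component, simp add: scaleR_conv_of_real field_simps)
  then have "vp \<in> neg_space (A + B)"
    using b_less_a by (intro neg_eigenvector_in_neg_space) auto
  moreover have "(A + B) *v vm = (-a - b) *\<^sub>R vm"
    unfolding vm_def using b_pos
    by (simp add: matrix_vector_mult_add_rdistrib matrix_vector_mult_diff_distrib cmatrix_vector_mult_scaleR
        AB_commute Av B_twice matrix_vector_mult_uminus algebra_simps power2_eq_square)
       (simp only: vec_eq_iff vector_scaleR_component vector_add_component, simp add: scaleR_conv_of_real field_simps)
  then have "vm \<in> neg_space (A + B)"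
    using b_less_a b_pos by (intro neg_eigenvector_in_neg_space) auto
  ultimately have "vp + vm \<in> neg_space (A + B)"
    unfolding neg_space_def by (rule span_add)
  moreover have "vp + vm = v"
    unfolding vp_def vm_def by (simp add: scaleR_add_right scaleR_diff_right flip: scaleR_add_left)
  ultimately show ?thesis by simp
qed

lemma neg_space_commuting_sum: "neg_space (A + B) = {v. A *v v = (-a) *\<^sub>R v}"
proof
  have "subspace {v. A *v v = (-a) *\<^sub>R v}"
    by (simp add: subspace_def matrix_vector_right_distrib cmatrix_vector_mult_scaleR scaleR_right_distrib)
  then show "neg_space (A + B) \<subseteq> {v. A *v v = (-a) *\<^sub>R v}"
    unfolding neg_space_def
    by (rule span_minimal[rotated]) (auto simp: of_real_smult_eq_scaleR dest: neg_eigenvector_commuting_sum)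
qed (use eigenspace_subset_neg_space in blast)

end

lemma hermitian_add: "hermitian M \<Longrightarrow> hermitian N \<Longrightarrow> hermitian (M + N :: complex^'n^'n)"
  by (simp add: hermitian_def cadj_def vec_eq_iff)

lemma eigenprojector_of_square_root:
  fixes A :: "complex^'n^'n" and a :: real
  assumes herm: "hermitian A" and A_square: "A ** A = (a\<^sup>2) *\<^sub>R mat 1" and a_pos: "a > 0"
  defines "P \<equiv> (1/2) *\<^sub>R (mat 1 - (1/a) *\<^sub>R A)"
  shows "P ** P = P" "hermitian P" "range (\<lambda>v. P *v v) = {v. A *v v = (-a) *\<^sub>R v}"
proof -
  have A_twice: "A *v (A *v v) = (a\<^sup>2) *\<^sub>R v" for v
    by (simp add: matrix_vector_mul_assoc A_square scaleR_cmatrix_vector_mult)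
  have Pv: "P *v v = (1/2) *\<^sub>R (v - (1/a) *\<^sub>R (A *v v))" for v
    by (simp add: P_def scaleR_cmatrix_vector_mult matrix_vector_mult_diff_rdistrib)
  have A_Pv: "A *v (P *v v) = (-a) *\<^sub>R (P *v v)" for v
    unfolding Pv cmatrix_vector_mult_scaleR matrix_vector_mult_diff_distrib A_twice
    using a_pos by (simp add: algebra_simps power2_eq_square)
  have P_fix: "P *v v = v" if "A *v v = (-a) *\<^sub>R v" for v
    unfolding Pv that using a_pos by (simp add: scaleR_add_right flip: scaleR_add_left)
  show "P ** P = P"
    by (rule matrix_eq[THEN iffD2]) (simp add: P_fix A_Pv flip: matrix_vector_mul_assoc)
  show "hermitian P"
    using herm unfolding hermitian_def cadj_def P_def vec_eq_iff by (simp add: mat_def)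
  show "range (\<lambda>v. P *v v) = {v. A *v v = (-a) *\<^sub>R v}"
  proof (intro equalityI subsetI)
    fix v assume "v \<in> {v. A *v v = (-a) *\<^sub>R v}"
    then have "v = P *v v" using P_fix by simp
    then show "v \<in> range (\<lambda>v. P *v v)" by (rule range_eqI)
  next
    fix w assume "w \<in> range (\<lambda>v. P *v v)"
    then obtain v where "w = P *v v" by blast
    then show "w \<in> {v. A *v v = (-a) *\<^sub>R v}" using A_Pv by simp
  qed
qed

lemma neg_proj_commuting_sum:
  fixes A B :: "complex^'n^'n" and a b :: real
  assumes "hermitian A" "A ** B = B ** A"
    and "A ** A = (a\<^sup>2) *\<^sub>R mat 1" "B ** B = (b\<^sup>2) *\<^sub>R mat 1"
    and "0 \<le> b" "b < a" "b = 0 \<Longrightarrow> B = 0"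
  shows "neg_proj (A + B) = (1/2) *\<^sub>R (mat 1 - (1/a) *\<^sub>R A)"
proof -
  have "a > 0" using assms(5,6) by simp
  from eigenprojector_of_square_root[OF assms(1,3) this] neg_space_commuting_sum[OF assms(2-7)]
  show ?thesis by (intro neg_proj_eqI) simp_all
qed

section \<open>Smooth maps\<close>

lemma frechet_derivative_eq: "(f has_derivative f') (at x) \<Longrightarrow> frechet_derivative f (at x) = f'"
  by (rule frechet_derivative_at[symmetric])

lemma smooth_differentiable: "smooth f \<Longrightarrow> f differentiable (at x)"
  by (erule smooth.cases) auto

lemma smooth_has_derivative: "smooth f \<Longrightarrow> (f has_derivative frechet_derivative f (at x)) (at x)"
  using smooth_differentiable frechet_derivative_works by blast

lemma smooth_frechet_derivative: "smooth f \<Longrightarrow> smooth (\<lambda>x. frechet_derivative f (at x) v)"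
  by (erule smooth.cases) auto

lemma smooth_continuous_on: "smooth f \<Longrightarrow> continuous_on S f"
  by (intro continuous_at_imp_continuous_on ballI differentiable_imp_continuous_within smooth_differentiable)

lemma frechet_derivative_add:
  fixes f g :: "'a::real_normed_vector \<Rightarrow> 'b::real_normed_vector"
  assumes "f differentiable at x" "g differentiable at x"
  shows "frechet_derivative (\<lambda>x. f x + g x) (at x)
    = (\<lambda>v. frechet_derivative f (at x) v + frechet_derivative g (at x) v)"
  using assms by (intro frechet_derivative_eq has_derivative_add) (simp_all add: frechet_derivative_works)

lemma smooth_const: "smooth (\<lambda>x::'a::euclidean_space. c::'b::real_normed_vector)"
proof (coinduction arbitrary: c rule: smooth.coinduct)
  case smooth
  then show ?case by (auto intro: differentiableI has_derivative_const)
qed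

lemma smooth_bounded_linear: "bounded_linear L \<Longrightarrow> smooth (L :: 'a::euclidean_space \<Rightarrow> 'b::real_normed_vector)"
proof (rule smoothI)
  assume L: "bounded_linear L"
  then have "frechet_derivative L (at x) = L" for x
    by (intro frechet_derivative_eq bounded_linear.has_derivative[OF L has_derivative_ident])
  then show "\<forall>v. smooth (\<lambda>x. frechet_derivative L (at x) v)" by (simp add: smooth_const)
qed (auto intro: bounded_linear_imp_differentiable)

lemma smooth_compose_bounded_linear_right:
  fixes f :: "'c::euclidean_space \<Rightarrow> 'b::real_normed_vector"
  assumes "smooth f" "bounded_linear (L :: 'a::euclidean_space \<Rightarrow> 'c)"
  shows "smooth (\<lambda>x. f (L x))"
  using assms
proof (coinduction arbitrary: f rule: smooth.coinduct)
  case smooth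
  note f = smooth(1) and L = smooth(2)
  have D: "((\<lambda>x. f (L x)) has_derivative (\<lambda>h. frechet_derivative f (at (L x)) (L h))) (at x)" for x
    using diff_chain_at[OF bounded_linear.has_derivative[OF L has_derivative_ident] smooth_has_derivative[OF f]]
    by (simp add: o_def)
  have "(\<lambda>x. frechet_derivative (\<lambda>x. f (L x)) (at x) v) = (\<lambda>x. frechet_derivative f (at (L x)) (L v))" for v
    by (simp add: frechet_derivative_eq[OF D])
  then show ?case using D L smooth_frechet_derivative[OF f] by (auto intro: differentiableI)
qed

text \<open>Smoothness of bilinear products is proved coinductively for the class of finite sums of
  such products, which, unlike the products themselves, is closed under differentiation.\<close>
inductive bilinear_sum for pr :: "'b::real_normed_vector \<Rightarrow> 'c::real_normed_vector \<Rightarrow> 'd::real_normed_vector" where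
  product: "smooth f \<Longrightarrow> smooth g \<Longrightarrow> bilinear_sum pr (\<lambda>x::'a::euclidean_space. pr (f x) (g x))"
| add: "bilinear_sum pr h1 \<Longrightarrow> bilinear_sum pr h2 \<Longrightarrow> bilinear_sum pr (\<lambda>x. h1 x + h2 x)"

lemma bilinear_sum_derivative:
  assumes pr_bilinear: "bounded_bilinear pr"
  shows "bilinear_sum pr h \<Longrightarrow>
    (\<forall>x. h differentiable at x) \<and> (\<forall>v. bilinear_sum pr (\<lambda>x. frechet_derivative h (at x) v))"
proof (induction rule: bilinear_sum.induct)
  case (product f g)
  let ?f' = "\<lambda>x. frechet_derivative f (at x)" and ?g' = "\<lambda>x. frechet_derivative g (at x)"
  have D: "((\<lambda>x. pr (f x) (g x)) has_derivative (\<lambda>h. pr (f x) (?g' x h) + pr (?f' x h) (g x))) (at x)" for x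
    by (rule bounded_bilinear.FDERIV[OF pr_bilinear smooth_has_derivative[OF product(1)] smooth_has_derivative[OF product(2)]])
  have "bilinear_sum pr (\<lambda>x. pr (f x) (?g' x v) + pr (?f' x v) (g x))" for v
    using product by (intro bilinear_sum.intros smooth_frechet_derivative)
  then show ?case using D frechet_derivative_eq[OF D] by (auto intro: differentiableI)
next
  case (add h1 h2)
  then show ?case by (simp add: frechet_derivative_add bilinear_sum.add)
qed

lemma smooth_bilinear_sum: "bounded_bilinear pr \<Longrightarrow> bilinear_sum pr h \<Longrightarrow> smooth h"
proof (coinduction arbitrary: h rule: smooth.coinduct)
  case smooth
  then show ?case using bilinear_sum_derivative by blast
qed

lemma smooth_bounded_bilinear:
  "bounded_bilinear pr \<Longrightarrow> smooth f \<Longrightarrow> smooth g \<Longrightarrow> smooth (\<lambda>x. pr (f x) (g x))"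
  by (blast intro: smooth_bilinear_sum bilinear_sum.product)

lemma smooth_scaleR: "smooth f \<Longrightarrow> smooth g \<Longrightarrow> smooth (\<lambda>x. f x *\<^sub>R g x)"
  by (rule smooth_bounded_bilinear[OF bounded_bilinear_scaleR])

lemma smooth_mult: "smooth f \<Longrightarrow> smooth g \<Longrightarrow> smooth (\<lambda>x. (f x :: real) * g x)"
  by (rule smooth_bounded_bilinear[OF bounded_bilinear_mult])

lemma smooth_inner: "smooth f \<Longrightarrow> smooth g \<Longrightarrow> smooth (\<lambda>x. f x \<bullet> g x)"
  by (rule smooth_bounded_bilinear[OF bounded_bilinear_inner])

lemma smooth_add:
  assumes "smooth f" "smooth g"
  shows "smooth (\<lambda>x. f x + g x)"
proof -
  have "bilinear_sum scaleR (\<lambda>x. (\<lambda>_. 1) x *\<^sub>R f x + (\<lambda>_. 1) x *\<^sub>R g x)"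
    using assms by (intro bilinear_sum.intros smooth_const)
  then show ?thesis using smooth_bilinear_sum[OF bounded_bilinear_scaleR] by simp
qed

lemma smooth_compose_bounded_linear:
  assumes "smooth f" "bounded_linear L"
  shows "smooth (\<lambda>x. L (f x))"
  using smooth_bounded_bilinear[OF bounded_bilinear.comp[OF bounded_bilinear_scaleR bounded_linear_ident assms(2)]
      smooth_const assms(1), of 1]
  by simp

lemma smooth_minus: "smooth f \<Longrightarrow> smooth (\<lambda>x. - f x)"
  by (rule smooth_compose_bounded_linear[OF _ bounded_linear_minus[OF bounded_linear_ident]])

lemma smooth_diff: "smooth f \<Longrightarrow> smooth g \<Longrightarrow> smooth (\<lambda>x. f x - g x)"
  using smooth_add[OF _ smooth_minus[of g]] by simp

text \<open>Likewise, the powers of a positive smooth function q with smooth coefficients form a class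
  closed under differentiation.\<close>
inductive powr_sum for q :: "'a::euclidean_space \<Rightarrow> real" where
  power: "smooth f \<Longrightarrow> powr_sum q (\<lambda>x. q x powr r * f x)"
| add: "powr_sum q h1 \<Longrightarrow> powr_sum q h2 \<Longrightarrow> powr_sum q (\<lambda>x. h1 x + h2 x)"

lemma powr_sum_derivative:
  fixes q :: "'a::euclidean_space \<Rightarrow> real"
  assumes q: "smooth q" and q_pos: "\<And>x. q x > 0"
  shows "powr_sum q h \<Longrightarrow> (\<forall>x. h differentiable at x) \<and> (\<forall>v. powr_sum q (\<lambda>x. frechet_derivative h (at x) v))"
proof (induction rule: powr_sum.induct)
  case (power f r)
  let ?q' = "\<lambda>x. frechet_derivative q (at x)" and ?f' = "\<lambda>x. frechet_derivative f (at x)"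
  have D_powr: "((\<lambda>x. q x powr r) has_derivative (\<lambda>h. r * q x powr (r - 1) * ?q' x h)) (at x)" for x
    using diff_chain_at[OF smooth_has_derivative[OF q]
        has_real_derivative_powr[OF q_pos, THEN has_field_derivative_imp_has_derivative]]
    by (simp add: o_def)
  have D: "((\<lambda>x. q x powr r * f x) has_derivative
      (\<lambda>h. q x powr r * ?f' x h + r * q x powr (r - 1) * ?q' x h * f x)) (at x)" for x
    by (rule has_derivative_mult[OF D_powr smooth_has_derivative[OF power]])
  have "powr_sum q (\<lambda>x. q x powr r * ?f' x v + q x powr (r - 1) * (r * ?q' x v * f x))" for v
    using q power by (intro powr_sum.intros smooth_mult smooth_const smooth_frechet_derivative)
  then show ?case using D frechet_derivative_eq[OF D] by (auto intro: differentiableI simp: mult_ac)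
next
  case (add h1 h2)
  then show ?case by (simp add: frechet_derivative_add powr_sum.add)
qed

lemma smooth_powr:
  fixes q :: "'a::euclidean_space \<Rightarrow> real"
  assumes q: "smooth q" and q_pos: "\<And>x. q x > 0"
  shows "smooth (\<lambda>x. q x powr r)"
proof -
  have "powr_sum q h \<Longrightarrow> smooth h" for h
  proof (coinduction arbitrary: h rule: smooth.coinduct)
    case smooth
    then show ?case using powr_sum_derivative[OF q q_pos] by blast
  qed
  moreover have "powr_sum q (\<lambda>x. q x powr r * (\<lambda>_. 1) x)"
    by (intro powr_sum.power smooth_const)
  ultimately show ?thesis by simp
qed

lemma smooth_inverse_norm:
  fixes f :: "'a::euclidean_space \<Rightarrow> 'b::real_inner"
  assumes "smooth f" "\<And>x. f x \<noteq> 0"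
  shows "smooth (\<lambda>x. 1 / norm (f x))"
proof -
  have "smooth (\<lambda>x. (f x \<bullet> f x) powr (-1/2))"
    using assms by (intro smooth_powr smooth_inner) auto
  moreover have "(f x \<bullet> f x) powr (-1/2) = 1 / norm (f x)" for x
  proof -
    have "(f x \<bullet> f x) powr (-1/2) = (norm (f x) powr 2) powr (-1/2)"
      using assms(2)[of x] by (simp add: dot_square_norm powr_realpow)
    also have "\<dots> = 1 / norm (f x)"
      by (simp add: powr_powr powr_minus_divide)
    finally show ?thesis .
  qed
  ultimately show ?thesis by simp
qed

section \<open>Commuting Pauli representations\<close>

lemma integral_complex_of_real_eq:
  "integral S (\<lambda>k. complex_of_real (g k)) = complex_of_real (integral S g)"
proof (cases "g integrable_on S")
  case True
  then show ?thesis using integral_linear[OF True bounded_linear_of_real] by (simp add: o_def)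
next
  case False
  then have "\<not> (\<lambda>k. complex_of_real (g k)) integrable_on S"
    using integrable_linear[OF _ bounded_linear_Re, of "\<lambda>k. complex_of_real (g k)" S] by (auto simp: o_def)
  then show ?thesis using False by (simp add: not_integrable_integral)
qed

locale commuting_pauli_pair =
  fixes A B :: "real^3 \<Rightarrow> complex^'n^'n"
  assumes linear_A: "linear A" and linear_B: "linear B"
    and hermitian_A: "hermitian (A u)" and hermitian_B: "hermitian (B u)"
    and A_mult: "A u ** A w = (u \<bullet> w) *\<^sub>R mat 1 + mat \<i> ** A (cross3 u w)"
    and B_mult: "B u ** B w = (u \<bullet> w) *\<^sub>R mat 1 + mat \<i> ** B (cross3 u w)"
    and trace_A: "trace (A u) = 0" and trace_B: "trace (B u) = 0"
    and commute: "A u ** B w = B w ** A u"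
begin

lemma bounded_linear_A: "bounded_linear A" and bounded_linear_B: "bounded_linear B"
  using linear_A linear_B by (simp_all add: linear_conv_bounded_linear)

lemma A_square: "A u ** A u = ((norm u)\<^sup>2) *\<^sub>R mat 1"
  using A_mult[of u u] linear_0[OF linear_A] by (simp add: power2_norm_eq_inner)

lemma B_square: "B u ** B u = ((norm u)\<^sup>2) *\<^sub>R mat 1"
  using B_mult[of u u] linear_0[OF linear_B] by (simp add: power2_norm_eq_inner)

lemma det_add_nonzero:
  assumes "norm w \<noteq> norm u"
  shows "det (A u + B w) \<noteq> 0"
proof (rule det_commuting_square_roots_add_nonzero[OF commute])
  show "A u ** A u = mat (of_real ((norm u)\<^sup>2))" "B w ** B w = mat (of_real ((norm w)\<^sup>2))"
    by (simp_all add: A_square B_square scaleR_mat_1)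
  show "(of_real ((norm u)\<^sup>2) :: complex) \<noteq> of_real ((norm w)\<^sup>2)"
    using assms by (simp only: of_real_eq_iff) (simp add: power2_eq_iff_nonneg)
qed

lemma eq_if_det_add_nonzero:
  assumes "norm w = norm u" "det (A u + B w) \<noteq> 0"
  shows "A u = B w"
proof (rule commuting_square_roots_eq_if_det_nonzero[OF commute _ _ assms(2)])
  show "A u ** A u = mat (of_real ((norm u)\<^sup>2))" "B w ** B w = mat (of_real ((norm u)\<^sup>2))"
    using assms(1) by (simp_all add: A_square B_square scaleR_mat_1)
qed

lemma neg_proj_add:
  assumes "norm w < norm u"
  shows "neg_proj (A u + B w) = (1/2) *\<^sub>R (mat 1 - A ((1 / norm u) *\<^sub>R u))"
  using neg_proj_commuting_sum[OF hermitian_A commute A_square B_square norm_ge_zero assms]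
    linear_0[OF linear_B] linear_scale[OF linear_A]
  by simp

lemma trace_curvature:
  "trace ((mat 1 - A n) ** (A X ** A Y - A Y ** A X)) = - (2 * of_nat CARD('n)) * \<i> * (n \<bullet> cross3 X Y)"
proof -
  define M where "M = mat \<i> ** A (cross3 X Y)"
  have commutator: "A X ** A Y - A Y ** A X = 2 *\<^sub>R M"
    using linear_neg[OF linear_A, of "cross3 X Y"]
    by (simp add: M_def A_mult[of X] A_mult[of Y] cross_skew[of Y X] inner_commute[of Y X] matrix_mult_uminus_right scaleR_2)
  have "trace M = 0" by (simp add: M_def trace_mat_mult trace_A)
  moreover have "A n ** M = mat \<i> ** (A n ** A (cross3 X Y))"
    unfolding M_def mat_matrix_mult[of \<i> "A (cross3 X Y)"] mat_matrix_mult[of \<i> "A n ** A (cross3 X Y)"]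
    by (simp add: matrix_mul_assoc)
  then have "trace (A n ** M) = \<i> * of_nat CARD('n) * (n \<bullet> cross3 X Y)"
    by (simp add: A_mult matrix_add_ldistrib trace_mat_mult trace_add trace_scaleR trace_I trace_A)
       (simp add: scaleR_conv_of_real)
  ultimately show ?thesis
    unfolding commutator matrix_diff_rdistrib matrix_mul_lid matrix_scalar_ac trace_sub
      scalar_matrix_assoc[symmetric] trace_scaleR
    by (simp add: scaleR_conv_of_real)
qed

lemma normalizing_homotopy:
  fixes x y :: "real \<times> real \<Rightarrow> real^3"
  assumes x: "smooth x" "periodic2 x" and y: "smooth y" "periodic2 y"
    and y_less_x: "\<And>k. norm (y k) < norm (x k)"
  shows "\<exists>G :: real \<Rightarrow> real \<times> real \<Rightarrow> complex^'n^'n.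
            smooth (\<lambda>z. G (fst z) (snd z))
          \<and> (\<forall>t\<in>{0..1}. periodic2 (G t) \<and> (\<forall>k. hermitian (G t k) \<and> det (G t k) \<noteq> 0))
          \<and> G 0 = (\<lambda>k. A (x k) + B (y k))
          \<and> G 1 = (\<lambda>k. (1 / norm (x k)) *\<^sub>R A (x k))"
proof -
  define s where "s t k = 1 - t + t * (1 / norm (x k))" for t k
  define G where "G t k = A (s t k *\<^sub>R x k) + B (((1 - t) * s t k) *\<^sub>R y k)" for t k
  have x_nonzero: "x k \<noteq> 0" for k
    using y_less_x[of k] by auto
  have "smooth (\<lambda>z::real \<times> (real \<times> real). x (snd z))" "smooth (\<lambda>z::real \<times> (real \<times> real). y (snd z))"
    using x(1) y(1) by (simp_all add: smooth_compose_bounded_linear_right bounded_linear_snd)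
  moreover have "smooth (\<lambda>z::real \<times> (real \<times> real). fst z)"
    by (rule smooth_bounded_linear[OF bounded_linear_fst])
  ultimately have "smooth (\<lambda>z. G (fst z) (snd z))"
    unfolding G_def s_def using x_nonzero
    by (intro smooth_add smooth_compose_bounded_linear[OF _ bounded_linear_A]
        smooth_compose_bounded_linear[OF _ bounded_linear_B] smooth_scaleR smooth_mult smooth_diff
        smooth_const smooth_inverse_norm) auto
  moreover have "periodic2 (G t)" for t
    using x(2) y(2) unfolding periodic2_def G_def s_def by simp
  moreover have "hermitian (G t k)" for t k
    unfolding G_def by (intro hermitian_add hermitian_A hermitian_B)
  moreover have "det (G t k) \<noteq> 0" if t: "t \<in> {0..1}" for t k
  proof -
    have s_pos: "s t k > 0"
      using t x_nonzero[of k] unfolding s_def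
      by (cases "t = 1") (auto intro: add_pos_nonneg)
    have "(1 - t) * norm (y k) < norm (x k)"
      using t y_less_x[of k] mult_left_le_one_le[of "norm (y k)" "1 - t"] by simp
    then have "s t k * ((1 - t) * norm (y k)) < s t k * norm (x k)"
      using s_pos by simp
    then have "norm (((1 - t) * s t k) *\<^sub>R y k) < norm (s t k *\<^sub>R x k)"
      using t s_pos by (simp add: abs_mult mult_ac)
    then show ?thesis
      unfolding G_def by (intro det_add_nonzero) simp
  qed
  moreover have "G 0 = (\<lambda>k. A (x k) + B (y k))" "G 1 = (\<lambda>k. (1 / norm (x k)) *\<^sub>R A (x k))"
    by (simp_all add: G_def s_def fun_eq_iff linear_0[OF linear_B] linear_scale[OF linear_A])
  ultimately show ?thesis by blast
qed

lemma occupied_chern_eq_degree: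
  fixes x y :: "real \<times> real \<Rightarrow> real^3"
  assumes x: "smooth x" and y_less_x: "\<And>k. norm (y k) < norm (x k)"
  shows "occupied_chern (\<lambda>k. A (x k) + B (y k))
    = of_real (CARD('n) / 2 * degree_S2 (\<lambda>k. (1 / norm (x k)) *\<^sub>R x k))"
proof -
  define n where "n k = (1 / norm (x k)) *\<^sub>R x k" for k
  define P where "P k = neg_proj (A (x k) + B (y k))" for k
  define g where "g k = n k \<bullet> cross3 (dx n k) (dy n k)" for k
  have x_nonzero: "x k \<noteq> 0" for k
    using y_less_x[of k] by auto
  have "smooth n"
    unfolding n_def using x x_nonzero by (intro smooth_scaleR smooth_inverse_norm)
  have P_eq: "P = (\<lambda>k. (1/2) *\<^sub>R (mat 1 - A (n k)))"
    by (simp add: fun_eq_iff P_def n_def neg_proj_add y_less_x)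
  have D: "(P has_derivative (\<lambda>v. (- 1/2) *\<^sub>R A (frechet_derivative n (at k) v))) (at k)" for k
    unfolding P_eq scaleR_right_diff_distrib
    using bounded_linear.has_derivative[OF bounded_linear_A smooth_has_derivative[OF \<open>smooth n\<close>], of k]
    by (auto intro!: derivative_eq_intros)
  have dP: "dx P k = (- 1/2) *\<^sub>R A (dx n k)" "dy P k = (- 1/2) *\<^sub>R A (dy n k)" for k
    by (simp_all add: dx_def dy_def frechet_derivative_eq[OF D])
  have curvature: "P k ** (dx P k ** dy P k - dy P k ** dx P k)
      = (1/8) *\<^sub>R ((mat 1 - A (n k)) ** (A (dx n k) ** A (dy n k) - A (dy n k) ** A (dx n k)))" for k
    unfolding dP unfolding P_eq by (simp add: matrix_mult_uminus_left matrix_mult_uminus_right matrix_scalar_ac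
        flip: scalar_matrix_assoc scaleR_right_diff_distrib)
  have integrand: "trace (P k ** (dx P k ** dy P k - dy P k ** dx P k))
      = - (of_nat CARD('n) / 4) * \<i> * of_real (g k)" for k
    unfolding curvature trace_scaleR trace_curvature g_def by (simp add: scaleR_conv_of_real)
  have "(\<lambda>k. neg_proj (A (x k) + B (y k))) = P"
    by (simp add: P_def fun_eq_iff)
  then have "occupied_chern (\<lambda>k. A (x k) + B (y k))
      = (\<i> / (2 * of_real pi)) * integral unit_square (\<lambda>k. - (of_nat CARD('n) / 4) * \<i> * of_real (g k))"
    by (simp add: occupied_chern_def chern_number_def integrand)
  also have "\<dots> = (\<i> / (2 * of_real pi)) * (- (of_nat CARD('n) / 4) * \<i>) * of_real (integral unit_square g)"
    by (simp add: integral_complex_of_real_eq)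
  also have "\<dots> = of_real (CARD('n) / 2 * ((1 / (4 * pi)) * integral unit_square g))"
    by (simp add: field_simps)
  finally show ?thesis
    unfolding degree_S2_def g_def n_def .
qed

end

section \<open>The matrices S and T\<close>

lemma vector3_nth: "vector [a,b,c] $ (1::3) = a" "vector [a,b,c] $ (2::3) = b" "vector [a,b,c] $ (3::3) = c"
  for a b c :: "'a::zero"
  by (simp_all add: vector_def)

lemmas ST_entries = blk_def Let_def idx4_simps hdot_tau_def tau0_def tau1_def tau2_def tau3_def zero2_def
   S1_def S2_def S3_def T1_def T2_def T3_def vS_def vT_def

text \<open>idx4_simps evaluates idx4 at the numeral 4, which is the zero of type 4.\<close>
lemma zero_4_eq_4: "(0::4) = 4"
  by simp

lemma vS_mult: "vS u ** vS w = (u \<bullet> w) *\<^sub>R mat 1 + mat \<i> ** vS (cross3 u w)"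
  unfolding vec_eq_iff forall_4 matrix_matrix_mult_def
  by (simp add: ST_entries zero_4_eq_4 sum_4 inner_vec_def sum_3 cross3_simps mat_def complex_eq_iff algebra_simps)

lemma vT_mult: "vT u ** vT w = (u \<bullet> w) *\<^sub>R mat 1 + mat \<i> ** vT (cross3 u w)"
  unfolding vec_eq_iff forall_4 matrix_matrix_mult_def
  by (simp add: ST_entries zero_4_eq_4 sum_4 inner_vec_def sum_3 cross3_simps mat_def complex_eq_iff algebra_simps)

lemma hermitian_vS: "hermitian (vS u)"
  unfolding hermitian_def cadj_def vec_eq_iff forall_4
  by (simp add: ST_entries zero_4_eq_4 complex_eq_iff)

lemma hermitian_vT: "hermitian (vT u)"
  unfolding hermitian_def cadj_def vec_eq_iff forall_4
  by (simp add: ST_entries zero_4_eq_4 complex_eq_iff)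

lemma trace_vS: "trace (vS u) = 0"
  by (simp add: trace_def sum_4 ST_entries zero_4_eq_4)

lemma trace_vT: "trace (vT u) = 0"
  by (simp add: trace_def sum_4 ST_entries zero_4_eq_4)

lemma vS_vT_commute: "vS u ** vT w = vT w ** vS u"
  unfolding vec_eq_iff forall_4 matrix_matrix_mult_def
  by (simp add: ST_entries zero_4_eq_4 sum_4 complex_eq_iff algebra_simps)

lemma vS_eq_vT_iff: "vS u = vT w \<longleftrightarrow> u = 0 \<and> w = 0"
  unfolding vec_eq_iff forall_4 forall_3
  by (auto simp: ST_entries zero_4_eq_4 complex_eq_iff)

lemma linear_vS: "linear vS"
  by (rule linearI) (simp_all add: vS_def algebra_simps)

lemma linear_vT: "linear vT"
  by (rule linearI) (simp_all add: vT_def algebra_simps)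

interpretation ST: commuting_pauli_pair vS vT
  by (rule commuting_pauli_pair.intro) (simp_all add: linear_vS linear_vT hermitian_vS hermitian_vT vS_mult vT_mult
      trace_vS trace_vT vS_vT_commute)

interpretation TS: commuting_pauli_pair vT vS
  by (rule commuting_pauli_pair.intro) (simp_all add: linear_vS linear_vT hermitian_vS hermitian_vT vS_mult vT_mult
      trace_vS trace_vT vS_vT_commute)

lemma smooth_hvec:
  assumes "smooth h"
  shows "smooth (hvec h)"
proof -
  have "bounded_linear (\<lambda>v::real^4. vector [v $ 1, v $ 2, v $ 3] :: real^3)"
    by (intro linear_conv_bounded_linear[THEN iffD1] linearI) (simp_all add: vec_eq_iff forall_3 vector3_nth)
  then show ?thesis
    unfolding hvec_def using assms by (rule smooth_compose_bounded_linear[rotated])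
qed

lemma smooth_hvec':
  assumes "smooth h" "smooth D"
  shows "smooth (hvec' h D)"
proof -
  have L: "bounded_linear (\<lambda>v::real^4. vector [0, 0, v $ 0] :: real^3)"
    "bounded_linear (\<lambda>z. vector [Re z, Im z, 0] :: real^3)"
    by (intro linear_conv_bounded_linear[THEN iffD1] linearI; simp add: vec_eq_iff forall_3 vector3_nth)+
  have "hvec' h D = (\<lambda>k. vector [0, 0, h k $ 0] + vector [Re (D k), Im (D k), 0])"
    by (simp add: hvec'_def fun_eq_iff vec_eq_iff forall_3 vector3_nth)
  then show ?thesis
    using smooth_add[OF smooth_compose_bounded_linear[OF assms(1) L(1)] smooth_compose_bounded_linear[OF assms(2) L(2)]]
    by simp
qed

lemma periodic2_hvec: "periodic2 h \<Longrightarrow> periodic2 (hvec h)"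
  by (simp add: periodic2_def hvec_def)

lemma periodic2_hvec': "periodic2 h \<Longrightarrow> periodic2 D \<Longrightarrow> periodic2 (hvec' h D)"
  by (simp add: periodic2_def hvec'_def)

lemma norm_hvec'_less_if_pfun_pos: "pfun h D k > 0 \<Longrightarrow> norm (hvec' h D k) < norm (hvec h k)"
  by (simp add: pfun_def power_less_imp_less_base)

lemma norm_hvec_less_if_pfun_neg: "pfun h D k < 0 \<Longrightarrow> norm (hvec h k) < norm (hvec' h D k)"
  by (simp add: pfun_def power_less_imp_less_base)

lemma pfun_nonzero:
  assumes "det (Hmat h D k) \<noteq> 0"
  shows "pfun h D k \<noteq> 0"
proof
  assume "pfun h D k = 0"
  then have "norm (hvec' h D k) = norm (hvec h k)"
    by (simp add: pfun_def power2_eq_iff_nonneg)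
  then have "vS (hvec h k) = vT (hvec' h D k)"
    using ST.eq_if_det_add_nonzero assms by (simp add: Hmat_decomp)
  then have "Hmat h D k = 0"
    by (simp add: Hmat_decomp vS_eq_vT_iff linear_0[OF linear_vS] linear_0[OF linear_vT])
  then show False
    using assms det_0 mat_0 by metis
qed

lemma continuous_nonvanishing_sign_cases:
  fixes f :: "'a::real_normed_vector \<Rightarrow> real"
  assumes "continuous_on UNIV f" "\<And>x. f x \<noteq> 0"
  shows "(\<forall>x. f x > 0) \<or> (\<forall>x. f x < 0)"
proof (rule ccontr)
  assume "\<not> ?thesis"
  then obtain a b where "f a \<le> 0" "f b \<ge> 0" by (auto simp: not_less)
  moreover have "connected (range f)"
    using assms(1) by (rule connected_continuous_image[OF _ connected_UNIV])
  ultimately have "0 \<in> range f"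
    unfolding connected_iff_interval by blast
  then show False using assms(2) by auto
qed

lemma pfun_sign_cases:
  assumes "smooth h" "smooth D" "\<forall>k. det (Hmat h D k) \<noteq> 0"
  shows "(\<forall>k. pfun h D k > 0) \<or> (\<forall>k. pfun h D k < 0)"
proof (rule continuous_nonvanishing_sign_cases)
  show "continuous_on UNIV (pfun h D)"
    unfolding pfun_def power2_norm_eq_inner using assms(1,2)
    by (intro smooth_continuous_on smooth_diff smooth_inner smooth_hvec smooth_hvec')
qed (use pfun_nonzero assms(3) in blast)

theorem mainTheorem2:
  fixes h :: "real \<times> real \<Rightarrow> real^4" and D :: "real \<times> real \<Rightarrow> complex"
  assumes h_smooth: "smooth h" and D_smooth: "smooth D"
    and h_per: "periodic2 h" and D_per: "periodic2 D"
    and nonsing: "\<forall>k. det (Hmat h D k) \<noteq> 0"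
  shows
    "((\<forall>k. pfun h D k > 0) \<or> (\<forall>k. pfun h D k < 0))
   \<and> ((\<forall>k. pfun h D k > 0) \<longrightarrow>
        (\<exists>G :: real \<Rightarrow> real \<times> real \<Rightarrow> complex^4^4.
            smooth (\<lambda>z. G (fst z) (snd z))
          \<and> (\<forall>t\<in>{0..1}. periodic2 (G t) \<and> (\<forall>k. hermitian (G t k) \<and> det (G t k) \<noteq> 0))
          \<and> G 0 = Hmat h D
          \<and> G 1 = (\<lambda>k. (1 / norm (hvec h k)) *\<^sub>R vS (hvec h k))))
   \<and> ((\<forall>k. pfun h D k < 0) \<longrightarrow>
        (\<exists>G :: real \<Rightarrow> real \<times> real \<Rightarrow> complex^4^4.
            smooth (\<lambda>z. G (fst z) (snd z))
          \<and> (\<forall>t\<in>{0..1}. periodic2 (G t) \<and> (\<forall>k. hermitian (G t k) \<and> det (G t k) \<noteq> 0))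
          \<and> G 0 = Hmat h D
          \<and> G 1 = (\<lambda>k. (1 / norm (hvec' h D k)) *\<^sub>R vT (hvec' h D k))))
   \<and> ((\<forall>k. pfun h D k > 0) \<longrightarrow>
        occupied_chern (Hmat h D) = complex_of_real (2 * degree_S2 (\<lambda>k. (1 / norm (hvec h k)) *\<^sub>R hvec h k))
      \<and> bdg_chern (Hmat h D) = complex_of_real (degree_S2 (\<lambda>k. (1 / norm (hvec h k)) *\<^sub>R hvec h k)))
   \<and> ((\<forall>k. pfun h D k < 0) \<longrightarrow>
        occupied_chern (Hmat h D) = complex_of_real (2 * degree_S2 (\<lambda>k. (1 / norm (hvec' h D k)) *\<^sub>R hvec' h D k))
      \<and> bdg_chern (Hmat h D) = complex_of_real (degree_S2 (\<lambda>k. (1 / norm (hvec' h D k)) *\<^sub>R hvec' h D k)))"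
proof -
  let ?x = "hvec h" and ?y = "hvec' h D"
  have x: "smooth ?x" "periodic2 ?x" and y: "smooth ?y" "periodic2 ?y"
    using assms by (simp_all add: smooth_hvec smooth_hvec' periodic2_hvec periodic2_hvec')
  have H: "Hmat h D = (\<lambda>k. vS (?x k) + vT (?y k))" "Hmat h D = (\<lambda>k. vT (?y k) + vS (?x k))"
    by (simp_all add: fun_eq_iff Hmat_decomp add.commute)
  from pfun_sign_cases[OF h_smooth D_smooth nonsing] show ?thesis
  proof
    assume p: "\<forall>k. pfun h D k > 0"
    note y_less_x = norm_hvec'_less_if_pfun_pos[OF p[rule_format]]
    have "(\<forall>k. pfun h D k < 0) = False" using p by (metis less_asym)
    with p ST.normalizing_homotopy[OF x y y_less_x, folded H(1)]
      ST.occupied_chern_eq_degree[OF x(1) y_less_x, folded H(1)]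
    show ?thesis by (simp only: simp_thms) (simp add: bdg_chern_def)
  next
    assume p: "\<forall>k. pfun h D k < 0"
    note x_less_y = norm_hvec_less_if_pfun_neg[OF p[rule_format]]
    have "(\<forall>k. pfun h D k > 0) = False" using p by (metis less_asym)
    with p TS.normalizing_homotopy[OF y x x_less_y, folded H(2)]
      TS.occupied_chern_eq_degree[OF y(1) x_less_y, folded H(2)]
    show ?thesis by (simp only: simp_thms) (simp add: bdg_chern_def)
  qed
qed

end
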